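(* Let $b\in\mathbb{K}_{d,1}$ and $b_n=\varphi_n*b$ as below. Then $H^\gamma_{b-b_n}(t,x)$ converges to $0$ uniformly on compact subsets of $(0,\infty)\times\mathbb{R}^d$ as $n\to\infty$.
   Context: Standing assumption: $d\ge2$, $\alpha\in(0,2)$; $b:\mathbb{R}^d\to\mathbb{R}^d$ with $\sup_x\int_{|x-y|<r}|b(y)||x-y|^{1-d}dy\to0$ as $r\downarrow0$ (Kato class $\mathbb{K}_{d,1}$). Let $\varphi\ge0$ be in $C_c^\infty(\mathbb{R}^d)$ with support in $B(0,1)$ and $\int\varphi=1$; $\varphi_n(x)=n^d\varphi(nx)$ and $b_n(x)=\int\varphi_n(x-y)b(y)dy$. Let $\gamma=(1+\alpha\wedge1)/2$, $H^\beta(r,x)=\frac{1}{|x|^{d-1}}\wedge\frac{r^\beta}{|x|^{d-1+2\beta}}$ and $H^\beta_f(r,x)=\int_{\mathbb{R}^d}|f(y)|H^\beta(r,x-y)dy$. *)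

theory Defs
  imports "HOL-Analysis.Analysis"
begin

coinductive smooth_fun :: "('a::euclidean_space \<Rightarrow> real) \<Rightarrow> bool" where
  "(\<forall>x. f differentiable (at x)) \<Longrightarrow>
   (\<forall>i\<in>Basis. smooth_fun (\<lambda>x. frechet_derivative f (at x) i)) \<Longrightarrow> smooth_fun f"

definition kato_d1 :: "('a::euclidean_space \<Rightarrow> 'a) \<Rightarrow> bool" where
  "kato_d1 b \<longleftrightarrow> b \<in> borel_measurable lborel \<and>
     ((\<lambda>r. SUP x. (\<integral>\<^sup>+ y. ennreal (norm (b y) * dist x y powr (1 - real DIM('a)))
                       * indicator (ball x r) y \<partial>lborel)) \<longlongrightarrow> 0) (at_right 0)"

definition moll :: "('a::euclidean_space \<Rightarrow> real) \<Rightarrow> nat \<Rightarrow> 'a \<Rightarrow> real" where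
  "moll \<phi> n x = real n ^ DIM('a) * \<phi> (real n *\<^sub>R x)"

definition mollify :: "('a::euclidean_space \<Rightarrow> real) \<Rightarrow> nat \<Rightarrow> ('a \<Rightarrow> 'a) \<Rightarrow> 'a \<Rightarrow> 'a" where
  "mollify \<phi> n b x = (\<integral> y. moll \<phi> n (x - y) *\<^sub>R b y \<partial>lborel)"

definition Hker :: "real \<Rightarrow> real \<Rightarrow> 'a::euclidean_space \<Rightarrow> real" where
  "Hker \<beta> r x = min (norm x powr (1 - real DIM('a)))
                     (r powr \<beta> / norm x powr (real DIM('a) - 1 + 2 * \<beta>))"

definition Hf :: "('a::euclidean_space \<Rightarrow> 'a) \<Rightarrow> real \<Rightarrow> real \<Rightarrow> 'a \<Rightarrow> ennreal" where
  "Hf f \<beta> r x = (\<integral>\<^sup>+ y. ennreal (norm (f y) * Hker \<beta> r (x - y)) \<partial>lborel)"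

end

theory Submission
  imports Defs
begin

(* Split H^beta(t, x - y) into a near part |x - y|^(1-d) on |x - y| < delta, a bounded middle part
   delta^(1-d) on |x - y| <= R and a far part T^beta |x - y|^(-p) on |x - y| >= R, where
   p = d - 1 + 2 beta > d because beta > 1/2.  Against the near and far parts |b - b_n| is bounded by
   |b| + phi_n * |b|: the near contribution is at most twice the Kato modulus at delta, and the far one
   is small uniformly in x because Kato functions carry mass at most r^(d-1) on every ball of a fixed
   radius r while |z|^(-p) is integrable at infinity.  Against the middle part we use
   |b - b_n|(y) <= int phi_n(v) |b(y) - b(y - v)| dv, whose L^1 norm on a ball tends to 0 by continuity
   of translations in L^1_loc.  Only beta > 1/2 enters. *)

section \<open>Translation invariance of Lebesgue measure and convolution bounds\<close>

lemma sets_borel_ball_cball [measurable]: "ball c r \<in> sets borel" "cball c r \<in> sets borel"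
  by auto

lemma lborel_distr_reflect:
  "distr lborel borel (\<lambda>v. y - v) = (lborel :: 'a::euclidean_space measure)"
proof -
  have "lborel = density (distr lborel borel (\<lambda>x. y + (-1::real) *\<^sub>R x)) (\<lambda>_. \<bar>-1::real\<bar>^DIM('a))"
    by (rule lborel_affine) simp
  then show ?thesis by (simp add: density_1)
qed

lemma nn_integral_lborel_reflect:
  fixes f :: "'a::euclidean_space \<Rightarrow> ennreal"
  assumes [measurable]: "f \<in> borel_measurable borel"
  shows "(\<integral>\<^sup>+ w. f w \<partial>lborel) = (\<integral>\<^sup>+ v. f (y - v) \<partial>lborel)"
  by (subst lborel_distr_reflect[symmetric, of y]) (simp add: nn_integral_distr)

lemma integral_lborel_reflect:
  fixes f :: "'a::euclidean_space \<Rightarrow> 'b::{banach, second_countable_topology}"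
  assumes [measurable]: "f \<in> borel_measurable borel"
  shows "(\<integral> w. f w \<partial>lborel) = (\<integral> v. f (y - v) \<partial>lborel)"
  by (subst lborel_distr_reflect[symmetric, of y]) (simp add: integral_distr)

lemma nn_integral_lborel_translate:
  fixes f :: "'a::euclidean_space \<Rightarrow> ennreal"
  assumes [measurable]: "f \<in> borel_measurable borel"
  shows "(\<integral>\<^sup>+ w. f w \<partial>lborel) = (\<integral>\<^sup>+ v. f (v + y) \<partial>lborel)"
  by (subst lborel_distr_plus[symmetric, of y]) (simp add: nn_integral_distr add.commute)

lemma nn_integral_conv_left_le:
  fixes g N k :: "'a::euclidean_space \<Rightarrow> ennreal"
  assumes [measurable]: "g \<in> borel_measurable borel" "N \<in> borel_measurable borel"
    "k \<in> borel_measurable borel"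
    and S: "\<And>x'. (\<integral>\<^sup>+ y. N y * k (x' - y) \<partial>lborel) \<le> S"
  shows "(\<integral>\<^sup>+ y. (\<integral>\<^sup>+ v. g v * N (y - v) \<partial>lborel) * k (x - y) \<partial>lborel)
           \<le> (\<integral>\<^sup>+ v. g v \<partial>lborel) * S"
proof -
  have shifted: "(\<integral>\<^sup>+ y. N (y - v) * k (x - y) \<partial>lborel) \<le> S" for v
  proof -
    have "(\<integral>\<^sup>+ y. N (y - v) * k (x - y) \<partial>lborel)
        = (\<integral>\<^sup>+ u. N u * k ((x - v) - u) \<partial>lborel)"
      by (subst nn_integral_lborel_translate[where y=v]) (simp_all add: algebra_simps)
    also have "\<dots> \<le> S" by (rule S)
    finally show ?thesis .
  qed
  have "(\<integral>\<^sup>+ y. (\<integral>\<^sup>+ v. g v * N (y - v) \<partial>lborel) * k (x - y) \<partial>lborel)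
      = (\<integral>\<^sup>+ y. (\<integral>\<^sup>+ v. g v * N (y - v) * k (x - y) \<partial>lborel) \<partial>lborel)"
    by (subst nn_integral_multc[symmetric]) auto
  also have "\<dots> = (\<integral>\<^sup>+ v. (\<integral>\<^sup>+ y. g v * N (y - v) * k (x - y) \<partial>lborel) \<partial>lborel)"
    by (rule lborel_pair.Fubini') measurable
  also have "\<dots> = (\<integral>\<^sup>+ v. g v * (\<integral>\<^sup>+ y. N (y - v) * k (x - y) \<partial>lborel) \<partial>lborel)"
    by (subst nn_integral_cmult[symmetric]) (auto simp: mult.assoc)
  also have "\<dots> \<le> (\<integral>\<^sup>+ v. g v * S \<partial>lborel)"
    by (intro nn_integral_mono mult_left_mono shifted) simp
  also have "\<dots> = (\<integral>\<^sup>+ v. g v \<partial>lborel) * S"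
    by (rule nn_integral_multc) simp
  finally show ?thesis .
qed

lemma nn_integral_conv_right_le:
  fixes g N k :: "'a::euclidean_space \<Rightarrow> ennreal"
  assumes [measurable]: "g \<in> borel_measurable borel" "N \<in> borel_measurable borel"
    "k \<in> borel_measurable borel"
    and S: "\<And>x'. (\<integral>\<^sup>+ y. N y * k (x' - y) \<partial>lborel) \<le> S"
  shows "(\<integral>\<^sup>+ y. N y * (\<integral>\<^sup>+ v. g v * k (x - y - v) \<partial>lborel) \<partial>lborel)
           \<le> (\<integral>\<^sup>+ v. g v \<partial>lborel) * S"
proof -
  have "(\<integral>\<^sup>+ y. N y * (\<integral>\<^sup>+ v. g v * k (x - y - v) \<partial>lborel) \<partial>lborel)
      = (\<integral>\<^sup>+ y. (\<integral>\<^sup>+ v. g v * (N y * k ((x - v) - y)) \<partial>lborel) \<partial>lborel)"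
    by (subst nn_integral_cmult[symmetric]) (auto simp: algebra_simps)
  also have "\<dots> = (\<integral>\<^sup>+ v. (\<integral>\<^sup>+ y. g v * (N y * k ((x - v) - y)) \<partial>lborel) \<partial>lborel)"
    by (rule lborel_pair.Fubini') measurable
  also have "\<dots> = (\<integral>\<^sup>+ v. g v * (\<integral>\<^sup>+ y. N y * k ((x - v) - y) \<partial>lborel) \<partial>lborel)"
    by (subst nn_integral_cmult[symmetric]) auto
  also have "\<dots> \<le> (\<integral>\<^sup>+ v. g v * S \<partial>lborel)"
    by (intro nn_integral_mono mult_left_mono S) simp
  also have "\<dots> = (\<integral>\<^sup>+ v. g v \<partial>lborel) * S"
    by (rule nn_integral_multc) simp
  finally show ?thesis .
qed

section \<open>Approximation of locally integrable functions\<close>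

definition radial_trunc :: "real \<Rightarrow> 'a::real_normed_vector \<Rightarrow> 'a" where
  "radial_trunc M z = z /\<^sub>R max 1 (norm z / M)"

lemma continuous_on_radial_trunc: "continuous_on S (radial_trunc M)"
proof (cases "M = 0")
  case True
  then show ?thesis unfolding radial_trunc_def by simp
next
  case False
  have "max 1 (norm z / M) \<noteq> 0" for z :: 'a by (metis max.cobounded1 not_one_le_zero)
  with False show ?thesis unfolding radial_trunc_def by (intro continuous_intros) auto
qed

lemma radial_trunc_measurable [measurable]: "radial_trunc M \<in> borel_measurable borel"
  by (rule borel_measurable_continuous_onI[OF continuous_on_radial_trunc])

lemma radial_trunc_eq_self: "0 < M \<Longrightarrow> norm z \<le> M \<Longrightarrow> radial_trunc M z = z"
  by (simp add: radial_trunc_def max_def divide_le_eq_1)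

lemma norm_radial_trunc_le:
  assumes "0 < M" shows "norm (radial_trunc M z) \<le> M"
proof (cases "norm z \<le> M")
  case True
  then show ?thesis using assms by (simp add: radial_trunc_eq_self)
next
  case False
  then have "max 1 (norm z / M) = norm z / M" using assms by (simp add: max_def le_divide_eq_1)
  with False assms show ?thesis by (simp add: radial_trunc_def)
qed

lemma norm_diff_radial_trunc_le: "norm (z - radial_trunc M z) \<le> norm z"
proof -
  define l where "l = max 1 (norm z / M)"
  have l: "l \<ge> 1" unfolding l_def by simp
  have "z - radial_trunc M z = (1 - inverse l) *\<^sub>R z"
    unfolding radial_trunc_def l_def[symmetric] by (simp add: scaleR_diff_left)
  moreover have "0 \<le> 1 - inverse l" "1 - inverse l \<le> 1" using l by (auto simp: inverse_le_1_iff)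
  ultimately show ?thesis using mult_right_mono[of "1 - inverse l" 1 "norm z"] by simp
qed

definition locally_integrable :: "('a::euclidean_space \<Rightarrow> 'b::euclidean_space) \<Rightarrow> bool" where
  "locally_integrable f \<longleftrightarrow> f \<in> borel_measurable borel \<and>
     (\<forall>R. (\<integral>\<^sup>+ y. ennreal (norm (f y)) * indicator (cball 0 R) y \<partial>lborel) < \<infinity>)"

lemma L1_approx_radial_trunc:
  fixes f :: "'a::euclidean_space \<Rightarrow> 'b::euclidean_space"
  assumes [measurable]: "f \<in> borel_measurable borel" "A \<in> sets borel"
    and fin: "(\<integral>\<^sup>+ y. ennreal (norm (f y)) * indicator A y \<partial>lborel) < \<infinity>" and e: "0 < e"
  obtains M where "0 < M"
    "(\<integral>\<^sup>+ y. ennreal (norm (f y - radial_trunc M (f y))) * indicator A y \<partial>lborel) < e"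
proof -
  let ?u = "\<lambda>m y. ennreal (norm (f y - radial_trunc (real (Suc m)) (f y))) * indicator A y"
  have "(\<lambda>m. \<integral>\<^sup>+ y. ?u m y \<partial>lborel) \<longlonglongrightarrow> (\<integral>\<^sup>+ y. 0 \<partial>(lborel :: 'a measure))"
  proof (rule nn_integral_dominated_convergence[where w="\<lambda>y. ennreal (norm (f y)) * indicator A y"
      and u="?u" and u'="\<lambda>y. 0"])
    show "AE y in lborel. ?u m y \<le> ennreal (norm (f y)) * indicator A y" for m
      using norm_diff_radial_trunc_le by (intro AE_I2) (auto simp: indicator_def)
    show "AE y in lborel. (\<lambda>m. ?u m y) \<longlonglongrightarrow> 0"
    proof (intro AE_I2 tendsto_eventually)
      fix y
      obtain m0 :: nat where "norm (f y) \<le> real m0" using real_arch_simple by blast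
      then show "\<forall>\<^sub>F m in sequentially. ?u m y = 0"
        unfolding eventually_sequentially by (intro exI[of _ m0]) (auto simp: radial_trunc_eq_self)
    qed
  qed (use fin in auto)
  then have "(\<lambda>m. \<integral>\<^sup>+ y. ?u m y \<partial>lborel) \<longlonglongrightarrow> 0" by simp
  then have "\<forall>\<^sub>F m in sequentially. (\<integral>\<^sup>+ y. ?u m y \<partial>lborel) < e"
    using e by (rule order_tendstoD(2))
  then obtain m where "(\<integral>\<^sup>+ y. ?u m y \<partial>lborel) < e"
    unfolding eventually_sequentially by blast
  then show ?thesis by (intro that[of "real (Suc m)"]) auto
qed

lemma borel_measurable_AE_limit_continuous:
  fixes f :: "'a::euclidean_space \<Rightarrow> 'b::euclidean_space"
  assumes [measurable]: "f \<in> borel_measurable borel"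
  obtains g where "\<And>k. continuous_on UNIV (g k)" "AE y in lborel. (\<lambda>k. g k y) \<longlonglongrightarrow> f y"
proof -
  have "f \<in> borel_measurable lebesgue" by (rule measurable_completion) simp
  then have "f measurable_on UNIV"
    by (simp add: measurable_on_iff_borel_measurable lebesgue_on_UNIV_eq)
  then obtain N g where N: "negligible N" and g: "\<And>k. continuous_on UNIV (g k)"
    and lim: "\<And>y. y \<notin> N \<Longrightarrow> (\<lambda>k. g k y) \<longlonglongrightarrow> f y"
    unfolding measurable_on_def by auto
  have "AE y in lborel. y \<notin> N"
    using AE_not_in[of N lebesgue] N by (simp add: negligible_iff_null_sets AE_completion_iff)
  then have "AE y in lborel. (\<lambda>k. g k y) \<longlonglongrightarrow> f y" by eventually_elim (rule lim)
  with g show ?thesis by (rule that)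
qed

lemma L1_approx_radial_trunc_continuous:
  fixes f :: "'a::euclidean_space \<Rightarrow> 'b::euclidean_space"
  assumes [measurable]: "f \<in> borel_measurable borel" "A \<in> sets borel"
    and A: "emeasure lborel A < \<infinity>" and M: "0 < M" and e: "0 < e"
  obtains c where "continuous_on UNIV c"
    "(\<integral>\<^sup>+ y. ennreal (norm (radial_trunc M (f y) - radial_trunc M (c y))) * indicator A y \<partial>lborel) < e"
proof -
  obtain g where g: "\<And>k. continuous_on UNIV (g k)" and lim: "AE y in lborel. (\<lambda>k. g k y) \<longlonglongrightarrow> f y"
    using borel_measurable_AE_limit_continuous[OF assms(1)] by blast
  let ?u = "\<lambda>k y. ennreal (norm (radial_trunc M (f y) - radial_trunc M (g k y))) * indicator A y"
  have "(\<lambda>k. \<integral>\<^sup>+ y. ?u k y \<partial>lborel) \<longlonglongrightarrow> (\<integral>\<^sup>+ y. 0 \<partial>(lborel :: 'a measure))"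
  proof (rule nn_integral_dominated_convergence[where w="\<lambda>y. ennreal (2 * M) * indicator A y"
      and u="?u" and u'="\<lambda>y. 0"])
    show "?u k \<in> borel_measurable lborel" for k
      using borel_measurable_continuous_onI[OF g[of k]] by measurable
    show "AE y in lborel. ?u k y \<le> ennreal (2 * M) * indicator A y" for k
    proof (intro AE_I2)
      fix y
      have "norm (radial_trunc M (f y) - radial_trunc M (g k y)) \<le> 2 * M"
        using norm_triangle_ineq4 norm_radial_trunc_le[OF M] by (smt (verit))
      then show "?u k y \<le> ennreal (2 * M) * indicator A y"
        by (auto simp: indicator_def ennreal_leI)
    qed
    show "AE y in lborel. (\<lambda>k. ?u k y) \<longlonglongrightarrow> 0"
      using lim
    proof eventually_elim
      case (elim y)
      have conv: "(\<lambda>k. radial_trunc M (g k y)) \<longlonglongrightarrow> radial_trunc M (f y)"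
        using continuous_on_tendsto_compose[OF continuous_on_radial_trunc[of UNIV] elim] by simp
      have "(\<lambda>k. norm (radial_trunc M (f y) - radial_trunc M (g k y))) \<longlonglongrightarrow> 0"
        using tendsto_norm[OF tendsto_diff[OF tendsto_const[of "radial_trunc M (f y)"] conv]]
        by (simp only: diff_self norm_zero)
      then have "(\<lambda>k. ennreal (norm (radial_trunc M (f y) - radial_trunc M (g k y)))) \<longlonglongrightarrow> ennreal 0"
        by (rule tendsto_ennrealI)
      then show ?case by (auto simp: indicator_def)
    qed
    show "(\<integral>\<^sup>+ y. ennreal (2 * M) * indicator A y \<partial>lborel) < \<infinity>"
      using A by (simp add: nn_integral_cmult_indicator ennreal_mult_less_top)
  qed auto
  then have "(\<lambda>k. \<integral>\<^sup>+ y. ?u k y \<partial>lborel) \<longlonglongrightarrow> 0" by simp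
  then have "\<forall>\<^sub>F k in sequentially. (\<integral>\<^sup>+ y. ?u k y \<partial>lborel) < e"
    using e by (rule order_tendstoD(2))
  then obtain k where "(\<integral>\<^sup>+ y. ?u k y \<partial>lborel) < e"
    unfolding eventually_sequentially by blast
  then show ?thesis by (intro that[OF g[of k]])
qed

lemma locally_integrable_continuous_approx:
  fixes f :: "'a::euclidean_space \<Rightarrow> 'b::euclidean_space"
  assumes f: "locally_integrable f" and e: "0 < e"
  obtains c h where "continuous_on UNIV c" "h \<in> borel_measurable borel"
    "\<And>y. norm (f y - c y) \<le> h y" "\<And>y. 0 \<le> h y"
    "(\<integral>\<^sup>+ y. ennreal (h y) * indicator (cball 0 R) y \<partial>lborel) \<le> ennreal e"
proof -
  let ?B = "cball (0::'a) R"
  have [measurable]: "f \<in> borel_measurable borel"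
    and fin: "(\<integral>\<^sup>+ y. ennreal (norm (f y)) * indicator ?B y \<partial>lborel) < \<infinity>"
    using f unfolding locally_integrable_def by auto
  obtain M where M: "0 < M"
    and trunc: "(\<integral>\<^sup>+ y. ennreal (norm (f y - radial_trunc M (f y))) * indicator ?B y \<partial>lborel) < e / 2"
    using L1_approx_radial_trunc[OF _ _ fin, of "ennreal (e / 2)"] e by auto
  obtain g where g: "continuous_on UNIV g"
    and approx: "(\<integral>\<^sup>+ y. ennreal (norm (radial_trunc M (f y) - radial_trunc M (g y))) * indicator ?B y \<partial>lborel)
      < e / 2"
    using L1_approx_radial_trunc_continuous[of f ?B M "ennreal (e / 2)"] M e
      emeasure_bounded_finite[of ?B] by auto
  define c where "c y = radial_trunc M (g y)" for y
  define h where "h y = norm (f y - radial_trunc M (f y)) + norm (radial_trunc M (f y) - c y)" for y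
  have c: "continuous_on UNIV c"
    unfolding c_def by (rule continuous_on_compose2[OF continuous_on_radial_trunc g]) auto
  note [measurable] = borel_measurable_continuous_onI[OF c]
  have [measurable]: "h \<in> borel_measurable borel" unfolding h_def by measurable
  have "(\<integral>\<^sup>+ y. ennreal (h y) * indicator ?B y \<partial>lborel)
      = (\<integral>\<^sup>+ y. ennreal (norm (f y - radial_trunc M (f y))) * indicator ?B y \<partial>lborel)
        + (\<integral>\<^sup>+ y. ennreal (norm (radial_trunc M (f y) - c y)) * indicator ?B y \<partial>lborel)"
    by (subst nn_integral_add[symmetric])
      (auto intro!: nn_integral_cong simp: h_def indicator_def ennreal_plus)
  also have "\<dots> \<le> ennreal (e / 2) + ennreal (e / 2)"
    using trunc approx unfolding c_def by (intro add_mono) auto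
  also have "\<dots> = ennreal e" using e by (simp flip: ennreal_plus)
  finally have "(\<integral>\<^sup>+ y. ennreal (h y) * indicator ?B y \<partial>lborel) \<le> ennreal e" .
  moreover have "norm (f y - c y) \<le> h y" for y
    unfolding h_def using norm_triangle_ineq[of "f y - radial_trunc M (f y)" "radial_trunc M (f y) - c y"]
    by simp
  ultimately show ?thesis
    by (intro that[of c h] c) (auto simp: h_def)
qed

lemma nn_integral_translate_cball_le:
  fixes g :: "'a::euclidean_space \<Rightarrow> ennreal"
  assumes [measurable]: "g \<in> borel_measurable borel" and v: "norm v \<le> 1"
  shows "(\<integral>\<^sup>+ y. g (y - v) * indicator (cball 0 \<rho>) y \<partial>lborel)
           \<le> (\<integral>\<^sup>+ y. g y * indicator (cball 0 (\<rho> + 1)) y \<partial>lborel)"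
proof -
  have "(\<integral>\<^sup>+ y. g (y - v) * indicator (cball 0 \<rho>) y \<partial>lborel)
      = (\<integral>\<^sup>+ u. g (u + v - v) * indicator (cball 0 \<rho>) (u + v) \<partial>lborel)"
    by (rule nn_integral_lborel_translate) measurable
  also have "\<dots> = (\<integral>\<^sup>+ u. g u * indicator (cball 0 \<rho>) (u + v) \<partial>lborel)"
    by simp
  also have "\<dots> \<le> (\<integral>\<^sup>+ u. g u * indicator (cball 0 (\<rho> + 1)) u \<partial>lborel)"
  proof (intro nn_integral_mono)
    fix u
    have "norm u \<le> norm (u + v) + norm v" using norm_triangle_ineq4[of "u + v" v] by simp
    then show "g u * indicator (cball 0 \<rho>) (u + v) \<le> g u * indicator (cball 0 (\<rho> + 1)) u"
      using v by (auto simp: indicator_def)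
  qed
  finally show ?thesis .
qed

lemma nn_integral_reflect_cball_le:
  fixes g :: "'a::euclidean_space \<Rightarrow> ennreal"
  assumes "norm x \<le> X"
  shows "(\<integral>\<^sup>+ y. g y * indicator (cball 0 R) (x - y) \<partial>lborel)
           \<le> (\<integral>\<^sup>+ y. g y * indicator (cball 0 (X + R)) y \<partial>lborel)"
proof (intro nn_integral_mono)
  fix y
  have "norm y \<le> X + R" if "norm (x - y) \<le> R"
    using norm_triangle_ineq4[of x "x - y"] assms that by simp
  then show "g y * indicator (cball 0 R) (x - y) \<le> g y * indicator (cball 0 (X + R)) y"
    by (auto simp: indicator_def)
qed

lemma continuous_translation_L1_small:
  fixes c :: "'a::euclidean_space \<Rightarrow> 'b::euclidean_space"
  assumes c: "continuous_on UNIV c" and e: "0 < e"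
  obtains \<eta> where "0 < \<eta>" "\<And>v. norm v < \<eta> \<Longrightarrow>
    (\<integral>\<^sup>+ y. ennreal (norm (c y - c (y - v))) * indicator (cball 0 \<rho>) y \<partial>lborel) \<le> ennreal e"
proof -
  let ?B = "cball (0::'a) \<rho>"
  define \<mu> where "\<mu> = measure lborel ?B"
  have \<mu>: "emeasure lborel ?B = ennreal \<mu>" "0 \<le> \<mu>"
    unfolding \<mu>_def using emeasure_bounded_finite[of ?B] by (auto simp: emeasure_eq_ennreal_measure)
  define e' where "e' = e / (\<mu> + 1)"
  have e': "0 < e'" "e' * \<mu> \<le> e"
    using e \<mu>(2) by (auto simp: e'_def field_simps)
  have "uniformly_continuous_on (cball 0 (\<rho> + 1)) c"
    by (rule compact_uniformly_continuous) (auto intro: continuous_on_subset[OF c])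
  then obtain \<eta> where \<eta>: "0 < \<eta>" and uc: "\<And>x x'. x \<in> cball 0 (\<rho> + 1) \<Longrightarrow>
      x' \<in> cball 0 (\<rho> + 1) \<Longrightarrow> dist x' x < \<eta> \<Longrightarrow> dist (c x') (c x) < e'"
    unfolding uniformly_continuous_on_def using e' by metis
  show ?thesis
  proof (rule that[of "min \<eta> 1"])
    fix v :: 'a assume v: "norm v < min \<eta> 1"
    have "norm (c y - c (y - v)) \<le> e'" if "y \<in> ?B" for y
    proof -
      have "norm (y - v) \<le> \<rho> + 1" using that v norm_triangle_ineq4[of y v] by simp
      then have "dist (c (y - v)) (c y) < e'"
        using uc[of y "y - v"] that v by (simp add: dist_norm norm_minus_commute)
      then show ?thesis by (simp add: dist_norm norm_minus_commute)
    qed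
    then have "(\<integral>\<^sup>+ y. ennreal (norm (c y - c (y - v))) * indicator ?B y \<partial>lborel)
        \<le> (\<integral>\<^sup>+ y. ennreal e' * indicator ?B y \<partial>lborel)"
      by (intro nn_integral_mono) (auto simp: indicator_def ennreal_leI)
    also have "\<dots> = ennreal (e' * \<mu>)"
      using e' \<mu> by (simp add: nn_integral_cmult_indicator ennreal_mult)
    also have "\<dots> \<le> ennreal e" using e'(2) by (rule ennreal_leI)
    finally show "(\<integral>\<^sup>+ y. ennreal (norm (c y - c (y - v))) * indicator ?B y \<partial>lborel) \<le> ennreal e" .
  qed (use \<eta> in simp)
qed

lemma locally_integrable_translation_L1_small:
  fixes f :: "'a::euclidean_space \<Rightarrow> 'b::euclidean_space"
  assumes f: "locally_integrable f" and e: "0 < e"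
  obtains \<eta> where "0 < \<eta>" "\<And>v. norm v < \<eta> \<Longrightarrow>
    (\<integral>\<^sup>+ y. ennreal (norm (f y - f (y - v))) * indicator (cball 0 \<rho>) y \<partial>lborel) \<le> ennreal e"
proof -
  let ?B = "cball (0::'a) \<rho>"
  have [measurable]: "f \<in> borel_measurable borel"
    using f unfolding locally_integrable_def by auto
  obtain c h where c: "continuous_on UNIV c" and [measurable]: "h \<in> borel_measurable borel"
    and h: "\<And>y. norm (f y - c y) \<le> h y" "\<And>y. 0 \<le> h y"
    and hI: "(\<integral>\<^sup>+ y. ennreal (h y) * indicator (cball 0 (\<rho> + 1)) y \<partial>lborel) \<le> ennreal (e / 3)"
    using locally_integrable_continuous_approx[OF f, of "e / 3" "\<rho> + 1"] e by auto
  note [measurable] = borel_measurable_continuous_onI[OF c]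
  obtain \<eta> where \<eta>: "0 < \<eta>" and c_small: "\<And>v. norm v < \<eta> \<Longrightarrow>
      (\<integral>\<^sup>+ y. ennreal (norm (c y - c (y - v))) * indicator ?B y \<partial>lborel) \<le> ennreal (e / 3)"
    using continuous_translation_L1_small[OF c, of "e / 3"] e by auto
  show ?thesis
  proof (rule that[of "min \<eta> 1"])
    fix v :: 'a assume v: "norm v < min \<eta> 1"
    have "norm (f y - f (y - v)) \<le> h y + h (y - v) + norm (c y - c (y - v))" for y
      using norm_triangle_ineq4[of "f y - c y" "f (y - v) - c (y - v)"] h(1)[of y] h(1)[of "y - v"]
        norm_triangle_ineq[of "f y - c y - (f (y - v) - c (y - v))" "c y - c (y - v)"]
      by (simp add: algebra_simps)
    then have "(\<integral>\<^sup>+ y. ennreal (norm (f y - f (y - v))) * indicator ?B y \<partial>lborel)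
      \<le> (\<integral>\<^sup>+ y. ennreal (h y) * indicator ?B y + ennreal (h (y - v)) * indicator ?B y
            + ennreal (norm (c y - c (y - v))) * indicator ?B y \<partial>lborel)"
      using h(2) by (intro nn_integral_mono) (auto simp: indicator_def ennreal_plus[symmetric] ennreal_leI
          simp del: ennreal_plus)
    also have "\<dots> = (\<integral>\<^sup>+ y. ennreal (h y) * indicator ?B y \<partial>lborel)
        + (\<integral>\<^sup>+ y. ennreal (h (y - v)) * indicator ?B y \<partial>lborel)
        + (\<integral>\<^sup>+ y. ennreal (norm (c y - c (y - v))) * indicator ?B y \<partial>lborel)"
      by (simp add: nn_integral_add)
    also have "\<dots> \<le> ennreal (e / 3) + ennreal (e / 3) + ennreal (e / 3)"
    proof (intro add_mono c_small)
      show "(\<integral>\<^sup>+ y. ennreal (h y) * indicator ?B y \<partial>lborel) \<le> ennreal (e / 3)"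
        by (rule order_trans[OF nn_integral_mono hI]) (auto simp: indicator_def)
      show "(\<integral>\<^sup>+ y. ennreal (h (y - v)) * indicator ?B y \<partial>lborel) \<le> ennreal (e / 3)"
        using v by (intro order_trans[OF nn_integral_translate_cball_le hI]) auto
    qed (use v in auto)
    also have "\<dots> = ennreal e" using e by (simp flip: ennreal_plus)
    finally show "(\<integral>\<^sup>+ y. ennreal (norm (f y - f (y - v))) * indicator ?B y \<partial>lborel) \<le> ennreal e" .
  qed (use \<eta> in simp)
qed

section \<open>Mollifiers\<close>

lemma smooth_fun_continuous: "smooth_fun f \<Longrightarrow> continuous_on UNIV f"
  by (erule smooth_fun.cases)
    (auto intro!: continuous_at_imp_continuous_on differentiable_imp_continuous_within)

locale mollifier =
  fixes \<phi> :: "'a::euclidean_space \<Rightarrow> real"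
  assumes continuous_phi: "continuous_on UNIV \<phi>" and phi_nonneg: "\<And>x. 0 \<le> \<phi> x"
    and phi_vanishes: "\<And>x. 1 \<le> norm x \<Longrightarrow> \<phi> x = 0" and integral_phi: "integral\<^sup>L lborel \<phi> = 1"
begin

lemma phi_measurable [measurable]: "\<phi> \<in> borel_measurable borel"
  by (rule borel_measurable_continuous_onI[OF continuous_phi])

lemma moll_measurable [measurable]: "moll \<phi> n \<in> borel_measurable borel"
  unfolding moll_def by measurable

lemma moll_nonneg: "0 \<le> moll \<phi> n v"
  unfolding moll_def using phi_nonneg by simp

lemma moll_eq_0:
  assumes "1 \<le> n" "1 / real n \<le> norm v" shows "moll \<phi> n v = 0"
proof -
  have "1 \<le> norm (real n *\<^sub>R v)" using assms by (auto simp: field_simps)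
  then show ?thesis unfolding moll_def using phi_vanishes by simp
qed

lemma phi_bounded: obtains C where "0 < C" "\<And>x. \<phi> x \<le> C"
proof -
  have "compact (\<phi> ` cball 0 1)"
    by (rule compact_continuous_image) (auto intro: continuous_on_subset[OF continuous_phi])
  then obtain C where C: "0 < C" "\<And>y. y \<in> \<phi> ` cball 0 1 \<Longrightarrow> norm y \<le> C"
    by (meson bounded_pos compact_imp_bounded)
  have "\<phi> x \<le> C" for x
    using C(2)[of "\<phi> x"] phi_vanishes[of x] C(1) by (cases "norm x \<le> 1") auto
  with C show ?thesis using that by blast
qed

lemma nn_integral_moll: assumes "1 \<le> n" shows "(\<integral>\<^sup>+ v. ennreal (moll \<phi> n v) \<partial>lborel) = 1"
proof -
  have "integrable lborel \<phi>"
    using integral_phi not_integrable_integral_eq by fastforce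
  then have "(\<integral>\<^sup>+ x. ennreal (\<phi> x) \<partial>lborel) = 1"
    using nn_integral_eq_integral[of lborel \<phi>] phi_nonneg integral_phi by simp
  moreover have "(\<integral>\<^sup>+ x. ennreal (\<phi> x) \<partial>lborel) = (\<integral>\<^sup>+ x. ennreal (moll \<phi> n x) \<partial>lborel)"
    using assms
    by (subst lborel_affine[of "real n" 0])
      (simp_all add: nn_integral_density nn_integral_distr moll_def ennreal_mult' phi_nonneg)
  ultimately show ?thesis by simp
qed

lemma integrable_moll: assumes "1 \<le> n" shows "integrable lborel (moll \<phi> n)"
  using nn_integral_moll[OF assms] moll_nonneg by (intro integrableI_nn_integral_finite[where x=1]) auto

lemma integral_moll: assumes "1 \<le> n" shows "integral\<^sup>L lborel (moll \<phi> n) = 1"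
  using nn_integral_eq_integral[OF integrable_moll[OF assms]] nn_integral_moll[OF assms] moll_nonneg
  by simp

definition abs_mollify :: "nat \<Rightarrow> ('a \<Rightarrow> 'a) \<Rightarrow> 'a \<Rightarrow> ennreal" where
  "abs_mollify n f y = (\<integral>\<^sup>+ v. ennreal (moll \<phi> n v) * ennreal (norm (f (y - v))) \<partial>lborel)"

definition moll_oscillation :: "nat \<Rightarrow> ('a \<Rightarrow> 'a) \<Rightarrow> 'a \<Rightarrow> ennreal" where
  "moll_oscillation n f y = (\<integral>\<^sup>+ v. ennreal (moll \<phi> n v) * ennreal (norm (f y - f (y - v))) \<partial>lborel)"

lemma abs_mollify_measurable:
  assumes [measurable]: "f \<in> borel_measurable borel"
  shows "abs_mollify n f \<in> borel_measurable borel"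
  unfolding abs_mollify_def[abs_def]
  by (rule lborel.borel_measurable_nn_integral[where N=lborel, simplified]) measurable

lemma moll_oscillation_measurable:
  assumes [measurable]: "f \<in> borel_measurable borel"
  shows "moll_oscillation n f \<in> borel_measurable borel"
  unfolding moll_oscillation_def[abs_def]
  by (rule lborel.borel_measurable_nn_integral[where N=lborel, simplified]) measurable

lemma norm_mollify_le:
  assumes [measurable]: "f \<in> borel_measurable borel"
  shows "ennreal (norm (mollify \<phi> n f y)) \<le> abs_mollify n f y"
proof (cases "integrable lborel (\<lambda>w. moll \<phi> n (y - w) *\<^sub>R f w)")
  case True
  have "ennreal (norm (mollify \<phi> n f y))
      \<le> (\<integral>\<^sup>+ w. ennreal (norm (moll \<phi> n (y - w) *\<^sub>R f w)) \<partial>lborel)"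
    unfolding mollify_def by (rule integral_norm_bound_ennreal[OF True])
  also have "\<dots> = (\<integral>\<^sup>+ v. ennreal (norm (moll \<phi> n (y - (y - v)) *\<^sub>R f (y - v))) \<partial>lborel)"
    by (rule nn_integral_lborel_reflect) measurable
  also have "\<dots> = abs_mollify n f y"
    unfolding abs_mollify_def using moll_nonneg by (intro nn_integral_cong) (simp add: ennreal_mult)
  finally show ?thesis .
next
  case False
  then show ?thesis by (simp add: mollify_def not_integrable_integral_eq)
qed

lemma integrable_moll_translate:
  assumes f: "locally_integrable f" and n: "1 \<le> n"
  shows "integrable lborel (\<lambda>v. moll \<phi> n v *\<^sub>R f (y - v))"
proof (rule integrableI_bounded)
  let ?B = "cball (0::'a) (norm y + 1)"
  have [measurable]: "f \<in> borel_measurable borel"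
    and fin: "(\<integral>\<^sup>+ w. ennreal (norm (f w)) * indicator ?B w \<partial>lborel) < \<infinity>"
    using f unfolding locally_integrable_def by auto
  show "(\<lambda>v. moll \<phi> n v *\<^sub>R f (y - v)) \<in> borel_measurable lborel" by measurable
  obtain C where C: "0 < C" "\<And>x. \<phi> x \<le> C" using phi_bounded by blast
  have "ennreal (norm (moll \<phi> n v *\<^sub>R f (y - v)))
      \<le> ennreal (real n ^ DIM('a) * C) * (ennreal (norm (f (y - v))) * indicator ?B (y - v))" for v
  proof (cases "norm v < 1 / real n")
    case True
    have "1 / real n \<le> 1" using n by simp
    then have "norm (y - v) \<le> norm y + 1"
      using True norm_triangle_ineq4[of y v] by linarith
    moreover have "norm (moll \<phi> n v *\<^sub>R f (y - v)) \<le> real n ^ DIM('a) * C * norm (f (y - v))"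
      using C(2) moll_nonneg[of n v] unfolding moll_def by (auto intro!: mult_right_mono mult_left_mono)
    ultimately show ?thesis
      using C by (simp add: ennreal_mult[symmetric] ennreal_leI del: ennreal_mult ennreal_mult')
  next
    case False
    then show ?thesis using moll_eq_0[OF n] by simp
  qed
  then have "(\<integral>\<^sup>+ v. ennreal (norm (moll \<phi> n v *\<^sub>R f (y - v))) \<partial>lborel)
      \<le> ennreal (real n ^ DIM('a) * C) * (\<integral>\<^sup>+ v. ennreal (norm (f (y - v))) * indicator ?B (y - v) \<partial>lborel)"
    by (subst nn_integral_cmult[symmetric]) (auto intro: nn_integral_mono)
  also have "(\<integral>\<^sup>+ v. ennreal (norm (f (y - v))) * indicator ?B (y - v) \<partial>lborel)
      = (\<integral>\<^sup>+ w. ennreal (norm (f w)) * indicator ?B w \<partial>lborel)"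
    by (rule nn_integral_lborel_reflect[symmetric]) measurable
  finally show "(\<integral>\<^sup>+ v. ennreal (norm (moll \<phi> n v *\<^sub>R f (y - v))) \<partial>lborel) < \<infinity>"
    using fin by (simp add: ennreal_mult_less_top order.strict_trans1)
qed

lemma norm_diff_mollify_le:
  assumes f: "locally_integrable f" and n: "1 \<le> n"
  shows "ennreal (norm (f y - mollify \<phi> n f y)) \<le> moll_oscillation n f y"
proof -
  have [measurable]: "f \<in> borel_measurable borel"
    using f unfolding locally_integrable_def by auto
  have const: "integrable lborel (\<lambda>v. moll \<phi> n v *\<^sub>R f y)"
    using integrable_moll[OF n] by (rule integrable_scaleR_left)
  have "mollify \<phi> n f y = (\<integral> v. moll \<phi> n (y - (y - v)) *\<^sub>R f (y - v) \<partial>lborel)"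
    unfolding mollify_def by (rule integral_lborel_reflect) measurable
  moreover have "f y = (\<integral> v. moll \<phi> n v *\<^sub>R f y \<partial>lborel)"
    using integral_moll[OF n] integrable_moll[OF n] by simp
  ultimately have "f y - mollify \<phi> n f y = (\<integral> v. moll \<phi> n v *\<^sub>R (f y - f (y - v)) \<partial>lborel)"
    using Bochner_Integration.integral_diff[OF const integrable_moll_translate[OF f n, of y]]
    by (simp add: scaleR_diff_right)
  moreover have "integrable lborel (\<lambda>v. moll \<phi> n v *\<^sub>R (f y - f (y - v)))"
    using Bochner_Integration.integrable_diff[OF const integrable_moll_translate[OF f n, of y]]
    by (simp add: scaleR_diff_right)
  ultimately have "ennreal (norm (f y - mollify \<phi> n f y))
      \<le> (\<integral>\<^sup>+ v. ennreal (norm (moll \<phi> n v *\<^sub>R (f y - f (y - v)))) \<partial>lborel)"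
    by (metis integral_norm_bound_ennreal)
  also have "\<dots> = moll_oscillation n f y"
    unfolding moll_oscillation_def using moll_nonneg
    by (intro nn_integral_cong) (simp add: ennreal_mult)
  finally show ?thesis .
qed

lemma moll_oscillation_L1_small:
  assumes f: "locally_integrable f" and e: "0 < e"
  shows "\<forall>\<^sub>F n in sequentially.
    (\<integral>\<^sup>+ y. moll_oscillation n f y * indicator (cball 0 \<rho>) y \<partial>lborel) \<le> ennreal e"
proof -
  let ?B = "cball (0::'a) \<rho>"
  have [measurable]: "f \<in> borel_measurable borel"
    using f unfolding locally_integrable_def by auto
  obtain \<eta> where \<eta>: "0 < \<eta>" and small: "\<And>v. norm v < \<eta> \<Longrightarrow>
      (\<integral>\<^sup>+ y. ennreal (norm (f y - f (y - v))) * indicator ?B y \<partial>lborel) \<le> ennreal e"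
    using locally_integrable_translation_L1_small[OF f e] by blast
  obtain k :: nat where k: "inverse (real (Suc k)) < \<eta>" using reals_Archimedean[OF \<eta>] by blast
  have "(\<integral>\<^sup>+ y. moll_oscillation n f y * indicator ?B y \<partial>lborel) \<le> ennreal e" if n: "Suc k \<le> n" for n
  proof -
    have n1: "1 \<le> n" using n by simp
    have "(\<integral>\<^sup>+ y. moll_oscillation n f y * indicator ?B y \<partial>lborel)
        = (\<integral>\<^sup>+ y. (\<integral>\<^sup>+ v. ennreal (moll \<phi> n v) * (ennreal (norm (f y - f (y - v))) * indicator ?B y) \<partial>lborel) \<partial>lborel)"
      unfolding moll_oscillation_def by (subst nn_integral_multc[symmetric]) (auto simp: mult.assoc)
    also have "\<dots> = (\<integral>\<^sup>+ v. (\<integral>\<^sup>+ y. ennreal (moll \<phi> n v) * (ennreal (norm (f y - f (y - v))) * indicator ?B y) \<partial>lborel) \<partial>lborel)"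
      by (rule lborel_pair.Fubini') measurable
    also have "\<dots> = (\<integral>\<^sup>+ v. ennreal (moll \<phi> n v) * (\<integral>\<^sup>+ y. ennreal (norm (f y - f (y - v))) * indicator ?B y \<partial>lborel) \<partial>lborel)"
      by (intro nn_integral_cong nn_integral_cmult) measurable
    also have "\<dots> \<le> (\<integral>\<^sup>+ v. ennreal (moll \<phi> n v) * ennreal e \<partial>lborel)"
    proof (intro nn_integral_mono)
      fix v
      show "ennreal (moll \<phi> n v) * (\<integral>\<^sup>+ y. ennreal (norm (f y - f (y - v))) * indicator ?B y \<partial>lborel)
          \<le> ennreal (moll \<phi> n v) * ennreal e"
      proof (cases "norm v < 1 / real n")
        case True
        have "1 / real n \<le> inverse (real (Suc k))" using n by (simp add: field_simps)
        then show ?thesis using True k by (intro mult_left_mono small) auto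
      next
        case False
        then show ?thesis using moll_eq_0[OF n1, of v] by simp
      qed
    qed
    also have "\<dots> = ennreal e"
      using nn_integral_moll[OF n1] by (subst nn_integral_multc) auto
    finally show ?thesis .
  qed
  then show ?thesis unfolding eventually_sequentially by blast
qed

lemma nn_integral_abs_mollify_kernel_le:
  assumes [measurable]: "f \<in> borel_measurable borel" "k \<in> borel_measurable borel"
    and n: "1 \<le> n" and S: "\<And>x'. (\<integral>\<^sup>+ y. ennreal (norm (f y)) * k (x' - y) \<partial>lborel) \<le> S"
  shows "(\<integral>\<^sup>+ y. abs_mollify n f y * k (x - y) \<partial>lborel) \<le> S"
proof -
  have "(\<integral>\<^sup>+ y. abs_mollify n f y * k (x - y) \<partial>lborel)
      \<le> (\<integral>\<^sup>+ v. ennreal (moll \<phi> n v) \<partial>lborel) * S"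
    unfolding abs_mollify_def by (rule nn_integral_conv_left_le[OF _ _ _ S]) measurable
  then show ?thesis using nn_integral_moll[OF n] by simp
qed

end

section \<open>Kernel estimates\<close>

lemma dyadic_bracket:
  fixes t :: real assumes "1 \<le> t"
  obtains k :: nat where "2 ^ k \<le> t" "t \<le> 2 * 2 ^ k"
proof -
  define k where "k = nat \<lfloor>log 2 t\<rfloor>"
  have "0 \<le> log 2 t" using assms by simp
  then have k: "real k \<le> log 2 t" "log 2 t < real k + 1"
    unfolding k_def by linarith+
  have "2 ^ k = 2 powr real k" by (simp add: powr_realpow)
  also have "\<dots> \<le> 2 powr log 2 t" using k by simp
  finally have lower: "2 ^ k \<le> t" using assms by simp
  have "t = 2 powr log 2 t" using assms by simp
  also have "\<dots> \<le> 2 powr (real k + 1)" using k by simp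
  also have "\<dots> = 2 * 2 ^ k" by (simp add: powr_add powr_realpow)
  finally show ?thesis using that lower by blast
qed

definition far_kernel :: "real \<Rightarrow> real \<Rightarrow> 'a::real_normed_vector \<Rightarrow> ennreal" where
  "far_kernel p R z = ennreal (1 / norm z powr p) * indicator {z. R \<le> norm z} z"

lemma far_kernel_measurable [measurable]:
  "far_kernel p R \<in> borel_measurable (borel :: 'a::euclidean_space measure)"
  unfolding far_kernel_def by measurable

lemma far_kernel_le_dyadic_sum:
  fixes v :: "'a::real_normed_vector"
  assumes \<rho>: "0 < \<rho>" and p: "0 \<le> p"
  shows "far_kernel p \<rho> v \<le> (\<Sum>k. ennreal ((\<rho> * 2 ^ k) powr (- p)) * indicator (cball 0 (2 * (\<rho> * 2 ^ k))) v)"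
proof (cases "\<rho> \<le> norm v")
  case True
  then obtain k where k: "2 ^ k \<le> norm v / \<rho>" "norm v / \<rho> \<le> 2 * 2 ^ k"
    using dyadic_bracket[of "norm v / \<rho>"] \<rho> by auto
  define a where "a = \<rho> * 2 ^ k"
  have a: "0 < a" "a \<le> norm v" "norm v \<le> 2 * a"
    using k \<rho> unfolding a_def by (auto simp: field_simps)
  have "v \<noteq> 0" using a by auto
  then have "0 < norm v powr p * a powr p" using a by simp
  then have "1 / norm v powr p \<le> 1 / a powr p"
    using a p by (intro divide_left_mono powr_mono2) auto
  also have "\<dots> = a powr (- p)" by (simp add: powr_minus divide_inverse)
  finally have "far_kernel p \<rho> v \<le> ennreal (a powr (- p)) * indicator (cball 0 (2 * a)) v"
    using a True by (simp add: far_kernel_def ennreal_leI)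
  moreover
  define T where "T j = ennreal ((\<rho> * 2 ^ j) powr (- p)) * indicator (cball 0 (2 * (\<rho> * 2 ^ j))) v"
    for j :: nat
  have "T k \<le> suminf T" using sum_le_suminf[of T "{k}"] by simp
  ultimately show ?thesis unfolding T_def a_def by (rule order_trans)
qed (simp add: far_kernel_def)

lemma dyadic_ball_term_eq:
  fixes d :: nat
  assumes \<rho>: "0 < \<rho>"
  shows "(\<rho> * 2 ^ k) powr (- p) * (unit_ball_vol (real d) * (2 * (\<rho> * 2 ^ k)) ^ d)
           = unit_ball_vol (real d) * 2 ^ d * \<rho> powr (real d - p)
               * (2 powr (real d - p)) ^ k"
proof -
  let ?V = "unit_ball_vol (real d)" and ?a = "\<rho> * 2 ^ k"
  have "(2 * ?a) ^ d = 2 ^ d * ?a powr real d"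
    using \<rho> by (simp add: power_mult_distrib powr_realpow)
  then have "?a powr (- p) * (?V * (2 * ?a) ^ d) = ?V * 2 ^ d * (?a powr (- p) * ?a powr real d)"
    by (simp add: mult_ac)
  also have "\<dots> = ?V * 2 ^ d * ?a powr (real d - p)"
    by (simp add: powr_add[symmetric])
  also have "?a powr (real d - p) = \<rho> powr (real d - p) * (2 powr (real d - p)) ^ k"
    using \<rho> by (simp add: powr_mult powr_realpow[symmetric] powr_powr mult.commute)
  finally show ?thesis by (simp add: mult_ac)
qed

lemma nn_integral_far_kernel_le:
  assumes \<rho>: "0 < \<rho>" and p: "real DIM('a) < p"
  defines "q \<equiv> 2 powr (real DIM('a) - p)"
  shows "(\<integral>\<^sup>+ v. far_kernel p \<rho> (v::'a::euclidean_space) \<partial>lborel)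
     \<le> ennreal (unit_ball_vol (real DIM('a)) * 2 ^ DIM('a) * \<rho> powr (real DIM('a) - p) / (1 - q))"
proof -
  define c where "c = unit_ball_vol (real DIM('a)) * 2 ^ DIM('a) * \<rho> powr (real DIM('a) - p)"
  have c: "0 < c" unfolding c_def using \<rho> by simp
  have q: "0 < q" "q < 1" unfolding q_def using p powr_less_mono[of "real DIM('a) - p" 0 2] by auto
  have "(\<integral>\<^sup>+ v. far_kernel p \<rho> (v::'a) \<partial>lborel)
      \<le> (\<integral>\<^sup>+ v. (\<Sum>k. ennreal ((\<rho> * 2 ^ k) powr (- p)) * indicator (cball (0::'a) (2 * (\<rho> * 2 ^ k))) v) \<partial>lborel)"
    by (intro nn_integral_mono far_kernel_le_dyadic_sum) (use \<rho> p in auto)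
  also have "\<dots> = (\<Sum>k. \<integral>\<^sup>+ v. ennreal ((\<rho> * 2 ^ k) powr (- p)) * indicator (cball (0::'a) (2 * (\<rho> * 2 ^ k))) v \<partial>lborel)"
    by (rule nn_integral_suminf) measurable
  also have "\<dots> = (\<Sum>k. ennreal (c * q ^ k))"
  proof (rule suminf_cong)
    fix k
    let ?B = "cball (0::'a) (2 * (\<rho> * 2 ^ k))"
    have "(\<integral>\<^sup>+ v. ennreal ((\<rho> * 2 ^ k) powr (- p)) * indicator ?B v \<partial>lborel)
        = ennreal ((\<rho> * 2 ^ k) powr (- p)) * emeasure lborel ?B"
      by (rule nn_integral_cmult_indicator) simp
    also have "\<dots> = ennreal ((\<rho> * 2 ^ k) powr (- p))
        * ennreal (unit_ball_vol (real DIM('a)) * (2 * (\<rho> * 2 ^ k)) ^ DIM('a))"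
      using \<rho> by (simp add: emeasure_cball)
    also have "\<dots> = ennreal ((\<rho> * 2 ^ k) powr (- p)
        * (unit_ball_vol (real DIM('a)) * (2 * (\<rho> * 2 ^ k)) ^ DIM('a)))"
      by (rule ennreal_mult[symmetric]) (use \<rho> in auto)
    also have "\<dots> = ennreal (c * q ^ k)"
      unfolding c_def q_def by (subst dyadic_ball_term_eq[OF \<rho>]) (rule refl)
    finally show "(\<integral>\<^sup>+ v. ennreal ((\<rho> * 2 ^ k) powr (- p)) * indicator ?B v \<partial>lborel) = ennreal (c * q ^ k)" .
  qed
  also have "\<dots> = ennreal (\<Sum>k. c * q ^ k)"
    using q c by (intro suminf_ennreal2) (auto intro!: summable_mult summable_geometric)
  also have "(\<Sum>k. c * q ^ k) = c / (1 - q)"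
    using suminf_mult[OF summable_geometric[of q], of c] suminf_geometric[of q] q
    by (simp add: divide_inverse)
  finally show ?thesis unfolding c_def .
qed

lemma far_kernel_le_conv_ball:
  fixes z :: "'a::euclidean_space"
  assumes r: "0 < r" "r \<le> \<rho>" and p: "0 \<le> p"
  shows "far_kernel p (2 * \<rho>) z
    \<le> ennreal (2 powr p / (unit_ball_vol (real DIM('a)) * r ^ DIM('a)))
       * (\<integral>\<^sup>+ v. far_kernel p \<rho> v * indicator (ball 0 r) (z - v) \<partial>lborel)"
proof (cases "2 * \<rho> \<le> norm z")
  case True
  define \<mu> where "\<mu> = unit_ball_vol (real DIM('a)) * r ^ DIM('a)"
  have \<mu>: "0 < \<mu>" unfolding \<mu>_def using r by simp
  have z: "0 < norm z" using True r by linarith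
  define c where "c = 1 / (2 * norm z) powr p"
  have "ennreal c * indicator (ball z r) v \<le> far_kernel p \<rho> v * indicator (ball 0 r) (z - v)" for v
  proof (cases "v \<in> ball z r")
    case True
    then have zv: "norm (z - v) < r" by (simp add: dist_norm)
    have "\<rho> \<le> norm v" "norm v \<le> 2 * norm z"
      using norm_triangle_ineq2[of z v] norm_triangle_ineq4[of z "z - v"] zv r \<open>2 * \<rho> \<le> norm z\<close>
      by auto
    moreover from this have "c \<le> 1 / norm v powr p"
      unfolding c_def using r p z by (intro divide_left_mono powr_mono2) (auto intro!: mult_pos_pos)
    ultimately show ?thesis using True zv by (simp add: far_kernel_def ennreal_leI)
  qed simp
  then have "ennreal c * ennreal \<mu> \<le> (\<integral>\<^sup>+ v. far_kernel p \<rho> v * indicator (ball 0 r) (z - v) \<partial>lborel)"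
    using nn_integral_mono[of lborel "\<lambda>v. ennreal c * indicator (ball z r) v"] r
    by (simp add: nn_integral_cmult_indicator emeasure_ball \<mu>_def)
  moreover have "1 / norm z powr p = 2 powr p / \<mu> * (c * \<mu>)"
    unfolding c_def using \<mu> z by (simp add: powr_mult field_simps)
  then have "ennreal (1 / norm z powr p) = ennreal (2 powr p / \<mu>) * (ennreal c * ennreal \<mu>)"
    using \<mu> by (simp add: c_def ennreal_mult[symmetric] del: ennreal_mult ennreal_mult')
  ultimately show ?thesis
    using True unfolding \<mu>_def[symmetric] by (simp add: far_kernel_def mult_left_mono)
qed (simp add: far_kernel_def)

lemma Hker_le_split:
  fixes z :: "'a::euclidean_space"
  assumes t: "0 < t" "t \<le> T" and \<beta>: "0 \<le> \<beta>" and \<delta>: "0 < \<delta>"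
  defines "p \<equiv> real DIM('a) - 1 + 2 * \<beta>"
  shows "Hker \<beta> t z \<le> (if norm z < \<delta> then norm z powr (1 - real DIM('a)) else 0)
     + (if norm z \<le> R then \<delta> powr (1 - real DIM('a)) else 0)
     + (if R \<le> norm z then T powr \<beta> * (1 / norm z powr p) else 0)" (is "_ \<le> ?near + ?mid + ?far")
proof -
  let ?d = "real DIM('a)"
  have nonneg: "0 \<le> ?near" "0 \<le> ?mid" "0 \<le> ?far" by auto
  have H1: "Hker \<beta> t z \<le> norm z powr (1 - ?d)" unfolding Hker_def by simp
  have H2: "Hker \<beta> t z \<le> t powr \<beta> / norm z powr p" unfolding Hker_def p_def by simp
  consider "norm z < \<delta>" | "\<delta> \<le> norm z" "norm z \<le> R" | "R < norm z" by linarith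
  then show ?thesis
  proof cases
    case 1
    then show ?thesis using H1 nonneg by simp
  next
    case 2
    have "1 - ?d \<le> 0" using DIM_positive[where 'a='a] by linarith
    then have "norm z powr (1 - ?d) \<le> \<delta> powr (1 - ?d)" by (rule powr_mono2'[OF _ \<delta> 2(1)])
    then show ?thesis using H1 2 nonneg by simp
  next
    case 3
    have "t powr \<beta> \<le> T powr \<beta>" using t \<beta> by (intro powr_mono2) auto
    then have "t powr \<beta> / norm z powr p \<le> T powr \<beta> / norm z powr p"
      by (intro divide_right_mono) auto
    then show ?thesis using H2 3 nonneg by simp
  qed
qed

lemma ennreal_tendsto_0I:
  fixes f :: "'b \<Rightarrow> ennreal"
  assumes "\<And>e. 0 < e \<Longrightarrow> eventually (\<lambda>n. f n \<le> ennreal e) F"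
  shows "(f \<longlongrightarrow> 0) F"
proof (rule order_tendstoI)
  fix a :: ennreal assume "0 < a"
  then obtain c where c: "0 < c" "c < a" using dense by blast
  then have "c < top" using top.not_eq_extremum by fastforce
  with c have "0 < enn2real c" "ennreal (enn2real c) = c"
    by (auto simp: enn2real_positive_iff)
  then show "eventually (\<lambda>n. f n < a) F"
    using assms[of "enn2real c"] c(2) by (auto elim: eventually_mono)
qed auto

section \<open>Functions of Kato class\<close>

locale kato_class =
  fixes b :: "'a::euclidean_space \<Rightarrow> 'a"
  assumes kato: "kato_d1 b"
begin

lemma b_measurable [measurable]: "b \<in> borel_measurable borel"
  using kato unfolding kato_d1_def by (simp add: measurable_lborel1 measurable_lborel2)

definition kato_modulus :: "real \<Rightarrow> ennreal" where
  "kato_modulus r = (SUP x. (\<integral>\<^sup>+ y. ennreal (norm (b y) * dist x y powr (1 - real DIM('a)))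
                                 * indicator (ball x r) y \<partial>lborel))"

lemma kato_modulus_small:
  assumes "0 < e" obtains r where "0 < r" "r \<le> 1" "kato_modulus r < e"
proof -
  have "(kato_modulus \<longlongrightarrow> 0) (at_right 0)"
    using kato unfolding kato_d1_def kato_modulus_def[abs_def] by simp
  then have "eventually (\<lambda>r. kato_modulus r < e) (at_right 0)"
    using order_tendstoD(2) assms by blast
  then obtain c where c: "0 < c" "\<And>r. 0 < r \<Longrightarrow> r < c \<Longrightarrow> kato_modulus r < e"
    unfolding eventually_at_right_field by auto
  show ?thesis using c by (intro that[of "min (c / 2) 1"]) auto
qed

definition near_kernel :: "real \<Rightarrow> 'a \<Rightarrow> ennreal" where
  "near_kernel r z = ennreal (norm z powr (1 - real DIM('a))) * indicator (ball 0 r) z"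

lemma near_kernel_measurable [measurable]: "near_kernel r \<in> borel_measurable borel"
  unfolding near_kernel_def by measurable

lemma nn_integral_near_kernel_le:
  "(\<integral>\<^sup>+ y. ennreal (norm (b y)) * near_kernel r (x - y) \<partial>lborel) \<le> kato_modulus r"
proof -
  have "(\<integral>\<^sup>+ y. ennreal (norm (b y)) * near_kernel r (x - y) \<partial>lborel)
      = (\<integral>\<^sup>+ y. ennreal (norm (b y) * dist x y powr (1 - real DIM('a))) * indicator (ball x r) y \<partial>lborel)"
    by (intro nn_integral_cong)
      (auto simp: near_kernel_def ennreal_mult dist_norm indicator_def norm_minus_commute)
  also have "\<dots> \<le> kato_modulus r" unfolding kato_modulus_def by (rule SUP_upper) simp
  finally show ?thesis .
qed

(* On ball x r the weight |x - y|^(1-d) is at least r^(1-d), except at the null set {x}, where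
   0 powr _ = 0; hence the Kato modulus controls the mass of |b| on small balls. *)
lemma nn_integral_ball_le:
  assumes r: "0 < r" "kato_modulus r \<le> 1"
  shows "(\<integral>\<^sup>+ y. ennreal (norm (b y)) * indicator (ball x r) y \<partial>lborel)
           \<le> ennreal (r powr (real DIM('a) - 1))"
proof -
  let ?c = "r powr (real DIM('a) - 1)"
  have "ennreal (norm (b y)) * indicator (ball x r) y \<le> ennreal ?c * (ennreal (norm (b y)) * near_kernel r (x - y))"
    if "y \<noteq> x" for y
  proof (cases "y \<in> ball x r")
    case True
    then have n: "0 < norm (x - y)" "norm (x - y) < r" using that by (auto simp: dist_norm)
    have "norm (x - y) powr (real DIM('a) - 1) \<le> ?c"
      using n by (intro powr_mono2) auto
    moreover have "norm (x - y) powr (1 - real DIM('a)) = inverse (norm (x - y) powr (real DIM('a) - 1))"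
      using n by (simp add: powr_minus[symmetric])
    ultimately have "1 \<le> ?c * norm (x - y) powr (1 - real DIM('a))"
      using n by (simp add: le_divide_eq_1_pos divide_inverse[symmetric])
    then have "norm (b y) \<le> ?c * (norm (b y) * norm (x - y) powr (1 - real DIM('a)))"
      using mult_left_mono[of 1 "?c * norm (x - y) powr (1 - real DIM('a))" "norm (b y)"]
      by (simp add: mult_ac)
    moreover have "x - y \<in> ball 0 r" using n by simp
    ultimately show ?thesis using True
      by (simp add: near_kernel_def ennreal_mult[symmetric] ennreal_leI
          del: ennreal_mult ennreal_mult')
  qed simp
  then have "(\<integral>\<^sup>+ y. ennreal (norm (b y)) * indicator (ball x r) y \<partial>lborel)
      \<le> (\<integral>\<^sup>+ y. ennreal ?c * (ennreal (norm (b y)) * near_kernel r (x - y)) \<partial>lborel)"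
    using AE_lborel_singleton[of x] by (intro nn_integral_mono_AE) (auto elim!: eventually_mono)
  also have "\<dots> = ennreal ?c * (\<integral>\<^sup>+ y. ennreal (norm (b y)) * near_kernel r (x - y) \<partial>lborel)"
    by (rule nn_integral_cmult) measurable
  also have "\<dots> \<le> ennreal ?c * 1"
    by (intro mult_left_mono order.trans[OF nn_integral_near_kernel_le r(2)]) auto
  finally show ?thesis by simp
qed

lemma locally_integrable: "locally_integrable b"
  unfolding locally_integrable_def
proof (intro conjI allI b_measurable)
  fix R
  obtain r where r: "0 < r" "kato_modulus r < 1" using kato_modulus_small[of 1] by auto
  have "compact (cball (0::'a) R)" by simp
  then obtain C :: "'a set" where C: "finite C" "cball 0 R \<subseteq> (\<Union>z\<in>C. ball z r)"
    by (rule compactE_image[where C="cball 0 R" and f="\<lambda>z. ball z r"]) (use r in auto)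
  have "ennreal (norm (b y)) * indicator (cball 0 R) y
      \<le> (\<Sum>z\<in>C. ennreal (norm (b y)) * indicator (ball z r) y)" for y
  proof (cases "y \<in> cball 0 R")
    case True
    then obtain z where z: "z \<in> C" "y \<in> ball z r" using C by auto
    have "ennreal (norm (b y)) * indicator (ball z r) y
        \<le> (\<Sum>z\<in>C. ennreal (norm (b y)) * indicator (ball z r) y)"
      by (rule member_le_sum) (use z C in auto)
    then show ?thesis using True z by simp
  qed simp
  then have "(\<integral>\<^sup>+ y. ennreal (norm (b y)) * indicator (cball 0 R) y \<partial>lborel)
      \<le> (\<integral>\<^sup>+ y. (\<Sum>z\<in>C. ennreal (norm (b y)) * indicator (ball z r) y) \<partial>lborel)"
    by (rule nn_integral_mono)
  also have "\<dots> = (\<Sum>z\<in>C. \<integral>\<^sup>+ y. ennreal (norm (b y)) * indicator (ball z r) y \<partial>lborel)"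
    by (rule nn_integral_sum) measurable
  also have "\<dots> \<le> (\<Sum>z\<in>C. ennreal (r powr (real DIM('a) - 1)))"
  proof (rule sum_mono)
    fix z
    show "(\<integral>\<^sup>+ y. ennreal (norm (b y)) * indicator (ball z r) y \<partial>lborel) \<le> ennreal (r powr (real DIM('a) - 1))"
      using nn_integral_ball_le[of r z] r by simp
  qed
  also have "\<dots> < \<infinity>" by (simp add: less_top[symmetric] ennreal_mult_eq_top_iff)
  finally show "(\<integral>\<^sup>+ y. ennreal (norm (b y)) * indicator (cball 0 R) y \<partial>lborel) < \<infinity>" .
qed

lemma nn_integral_far_kernel_decay:
  assumes p: "real DIM('a) < p"
  obtains K where "0 < K" "\<And>\<rho> x. 1 \<le> \<rho> \<Longrightarrow>
    (\<integral>\<^sup>+ y. ennreal (norm (b y)) * far_kernel p (2 * \<rho>) (x - y) \<partial>lborel)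
      \<le> ennreal (K * \<rho> powr (real DIM('a) - p))"
proof -
  let ?d = "real DIM('a)"
  obtain r where r: "0 < r" "r \<le> 1" "kato_modulus r < 1" using kato_modulus_small[of 1] by auto
  have S: "(\<integral>\<^sup>+ y. ennreal (norm (b y)) * indicator (ball 0 r) (x' - y) \<partial>lborel)
      \<le> ennreal (r powr (?d - 1))" for x'
    using nn_integral_ball_le[of r x'] r
    by (simp add: mem_ball dist_norm norm_minus_commute indicator_def cong: if_cong)
  define C where "C = 2 powr p / (unit_ball_vol ?d * r ^ DIM('a))"
  define A where "A = unit_ball_vol ?d * 2 ^ DIM('a) / (1 - 2 powr (?d - p))"
  have "2 powr (?d - p) < 1" using p powr_less_mono[of "?d - p" 0 2] by auto
  moreover have "0 < unit_ball_vol ?d" by (rule unit_ball_vol_pos) simp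
  ultimately have C: "0 < C" and A: "0 < A"
    unfolding C_def A_def using r by (auto intro!: divide_pos_pos simp del: unit_ball_vol_pos)
  show ?thesis
  proof (rule that[of "C * A * r powr (?d - 1)"])
    fix \<rho> :: real and x :: 'a assume \<rho>: "1 \<le> \<rho>"
    have "(\<integral>\<^sup>+ y. ennreal (norm (b y)) * far_kernel p (2 * \<rho>) (x - y) \<partial>lborel)
        \<le> (\<integral>\<^sup>+ y. ennreal (norm (b y))
              * (\<integral>\<^sup>+ v. ennreal C * far_kernel p \<rho> v * indicator (ball 0 r) (x - y - v) \<partial>lborel) \<partial>lborel)"
      using far_kernel_le_conv_ball[of r \<rho> p] r \<rho> p DIM_positive[where 'a='a]
      by (intro nn_integral_mono mult_left_mono)
        (auto simp: C_def nn_integral_cmult[symmetric] mult.assoc)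
    also have "\<dots> \<le> (\<integral>\<^sup>+ v. ennreal C * far_kernel p \<rho> (v::'a) \<partial>lborel) * ennreal (r powr (?d - 1))"
      by (rule nn_integral_conv_right_le[OF _ _ _ S]) measurable
    also have "\<dots> = ennreal C * (\<integral>\<^sup>+ v. far_kernel p \<rho> (v::'a) \<partial>lborel) * ennreal (r powr (?d - 1))"
      by (simp add: nn_integral_cmult)
    also have "\<dots> \<le> ennreal C * ennreal (A * \<rho> powr (?d - p)) * ennreal (r powr (?d - 1))"
      using nn_integral_far_kernel_le[where 'a='a, of \<rho> p] \<rho> p
      by (intro mult_right_mono mult_left_mono) (auto simp: A_def field_simps)
    also have "\<dots> = ennreal (C * A * r powr (?d - 1) * \<rho> powr (?d - p))"
      using r C A by (simp add: ennreal_mult[symmetric] mult_ac del: ennreal_mult ennreal_mult')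
    finally show "(\<integral>\<^sup>+ y. ennreal (norm (b y)) * far_kernel p (2 * \<rho>) (x - y) \<partial>lborel)
        \<le> ennreal (C * A * r powr (?d - 1) * \<rho> powr (?d - p))" .
  qed (use r C A in simp)
qed

lemma nn_integral_far_kernel_small:
  assumes p: "real DIM('a) < p" and e: "0 < e"
  obtains R where "\<And>x. (\<integral>\<^sup>+ y. ennreal (norm (b y)) * far_kernel p R (x - y) \<partial>lborel) \<le> ennreal e"
proof -
  obtain K where K: "0 < K" and decay: "\<And>\<rho> x. 1 \<le> \<rho> \<Longrightarrow>
      (\<integral>\<^sup>+ y. ennreal (norm (b y)) * far_kernel p (2 * \<rho>) (x - y) \<partial>lborel)
        \<le> ennreal (K * \<rho> powr (real DIM('a) - p))"
    using nn_integral_far_kernel_decay[OF p] by blast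
  have "((\<lambda>\<rho>. \<rho> powr (real DIM('a) - p)) \<longlongrightarrow> 0) at_top"
    using p by (intro tendsto_neg_powr filterlim_ident) auto
  then have "eventually (\<lambda>\<rho>. \<rho> powr (real DIM('a) - p) < e / K) at_top"
    using e K by (intro order_tendstoD(2)) auto
  then obtain \<rho> where \<rho>: "1 \<le> \<rho>" "\<rho> powr (real DIM('a) - p) < e / K"
    unfolding eventually_at_top_linorder by (meson max.cobounded1 max.cobounded2)
  have "ennreal (K * \<rho> powr (real DIM('a) - p)) \<le> ennreal e"
    using \<rho>(2) K by (intro ennreal_leI) (simp add: field_simps)
  then show ?thesis using decay[OF \<rho>(1)] by (intro that[of "2 * \<rho>"]) (rule order_trans)
qed

end

section \<open>Mollification of Kato class functions\<close>

locale kato_mollification = kato_class b + mollifier \<phi>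
  for b :: "'a::euclidean_space \<Rightarrow> 'a" and \<phi> :: "'a \<Rightarrow> real"
begin

lemma abs_mollify_b_measurable [measurable]: "abs_mollify n b \<in> borel_measurable borel"
  by (rule abs_mollify_measurable) measurable

lemma moll_oscillation_b_measurable [measurable]: "moll_oscillation n b \<in> borel_measurable borel"
  by (rule moll_oscillation_measurable) measurable

lemma norm_diff_mollify_Hker_le:
  assumes n: "1 \<le> n" and t: "0 < t" "t \<le> T" and \<beta>: "0 \<le> \<beta>" and \<delta>: "0 < \<delta>"
  defines "p \<equiv> real DIM('a) - 1 + 2 * \<beta>"
  shows "ennreal (norm (b y - mollify \<phi> n b y) * Hker \<beta> t z)
    \<le> (ennreal (norm (b y)) + abs_mollify n b y) * (near_kernel \<delta> z + ennreal (T powr \<beta>) * far_kernel p R z)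
       + moll_oscillation n b y * (ennreal (\<delta> powr (1 - real DIM('a))) * indicator (cball 0 R) z)"
proof -
  let ?d = "real DIM('a)"
  define a where "a = norm (b y - mollify \<phi> n b y)"
  define h1 where "h1 = (if norm z < \<delta> then norm z powr (1 - ?d) else 0)"
  define h2 where "h2 = (if norm z \<le> R then \<delta> powr (1 - ?d) else 0)"
  define h3 where "h3 = (if R \<le> norm z then T powr \<beta> * (1 / norm z powr p) else 0)"
  have nonneg: "0 \<le> h1" "0 \<le> h2" "0 \<le> h3" "0 \<le> a" unfolding h1_def h2_def h3_def a_def by auto
  have "a * Hker \<beta> t z \<le> a * (h1 + h2 + h3)"
    using Hker_le_split[OF t \<beta> \<delta>, of z R] nonneg unfolding h1_def h2_def h3_def p_def
    by (intro mult_left_mono) auto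
  then have "ennreal (a * Hker \<beta> t z) \<le> ennreal a * (ennreal h1 + ennreal h3) + ennreal a * ennreal h2"
    using nonneg by (simp add: ennreal_plus[symmetric] ennreal_mult[symmetric] algebra_simps ennreal_leI
        del: ennreal_plus ennreal_mult ennreal_mult')
  also have "ennreal h1 + ennreal h3 = near_kernel \<delta> z + ennreal (T powr \<beta>) * far_kernel p R z"
    by (auto simp: h1_def h3_def near_kernel_def far_kernel_def ennreal_mult[symmetric]
        simp del: ennreal_mult ennreal_mult')
  also have "ennreal h2 = ennreal (\<delta> powr (1 - ?d)) * indicator (cball 0 R) z"
    by (simp add: h2_def)
  finally have split: "ennreal (a * Hker \<beta> t z)
      \<le> ennreal a * (near_kernel \<delta> z + ennreal (T powr \<beta>) * far_kernel p R z)
        + ennreal a * (ennreal (\<delta> powr (1 - ?d)) * indicator (cball 0 R) z)" .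
  have "ennreal a \<le> ennreal (norm (b y)) + ennreal (norm (mollify \<phi> n b y))"
    unfolding a_def using norm_triangle_ineq4 by (simp add: ennreal_plus[symmetric] ennreal_leI del: ennreal_plus)
  also have "\<dots> \<le> ennreal (norm (b y)) + abs_mollify n b y"
    by (intro add_left_mono norm_mollify_le) measurable
  finally have "ennreal a \<le> ennreal (norm (b y)) + abs_mollify n b y" .
  moreover have "ennreal a \<le> moll_oscillation n b y"
    unfolding a_def by (rule norm_diff_mollify_le[OF locally_integrable n])
  ultimately show ?thesis
    unfolding a_def[symmetric] by (intro order_trans[OF split] add_mono mult_right_mono) simp_all
qed

lemma nn_integral_Hker_near_far_le:
  assumes n: "1 \<le> n"
    and \<epsilon>: "0 < \<epsilon>" and c: "0 < c" and near: "kato_modulus \<delta> \<le> ennreal \<epsilon>"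
    and far: "\<And>x'. (\<integral>\<^sup>+ y. ennreal (norm (b y)) * far_kernel p R (x' - y) \<partial>lborel) \<le> ennreal (\<epsilon> / c)"
  shows "(\<integral>\<^sup>+ y. (ennreal (norm (b y)) + abs_mollify n b y)
            * (near_kernel \<delta> (x - y) + ennreal c * far_kernel p R (x - y)) \<partial>lborel)
          \<le> ennreal (4 * \<epsilon>)"
proof -
  let ?k = "\<lambda>z. near_kernel \<delta> z + ennreal c * far_kernel p R z"
  have S: "(\<integral>\<^sup>+ y. ennreal (norm (b y)) * ?k (x' - y) \<partial>lborel) \<le> ennreal (2 * \<epsilon>)" for x'
  proof -
    have "(\<integral>\<^sup>+ y. ennreal (norm (b y)) * ?k (x' - y) \<partial>lborel)
        = (\<integral>\<^sup>+ y. ennreal (norm (b y)) * near_kernel \<delta> (x' - y) \<partial>lborel)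
          + ennreal c * (\<integral>\<^sup>+ y. ennreal (norm (b y)) * far_kernel p R (x' - y) \<partial>lborel)"
      by (simp add: distrib_left nn_integral_add nn_integral_cmult[symmetric] mult.left_commute)
    also have "\<dots> \<le> ennreal \<epsilon> + ennreal c * ennreal (\<epsilon> / c)"
      by (intro add_mono mult_left_mono far order.trans[OF nn_integral_near_kernel_le near]) auto
    also have "ennreal c * ennreal (\<epsilon> / c) = ennreal \<epsilon>"
      using \<epsilon> c by (simp add: ennreal_mult[symmetric] del: ennreal_mult ennreal_mult')
    also have "ennreal \<epsilon> + ennreal \<epsilon> = ennreal (2 * \<epsilon>)"
      using \<epsilon> by (simp flip: ennreal_plus)
    finally show ?thesis .
  qed
  have "(\<integral>\<^sup>+ y. (ennreal (norm (b y)) + abs_mollify n b y) * ?k (x - y) \<partial>lborel)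
      = (\<integral>\<^sup>+ y. ennreal (norm (b y)) * ?k (x - y) \<partial>lborel) + (\<integral>\<^sup>+ y. abs_mollify n b y * ?k (x - y) \<partial>lborel)"
    by (simp add: distrib_right nn_integral_add)
  also have "\<dots> \<le> ennreal (2 * \<epsilon>) + ennreal (2 * \<epsilon>)"
    by (intro add_mono S nn_integral_abs_mollify_kernel_le[OF _ _ n S]) measurable
  also have "\<dots> = ennreal (4 * \<epsilon>)"
    using \<epsilon> by (simp flip: ennreal_plus)
  finally show ?thesis .
qed

lemma Hf_diff_mollify_le:
  assumes n: "1 \<le> n" and t: "0 < t" "t \<le> T" and \<beta>: "0 \<le> \<beta>" and x: "norm x \<le> X"
    and \<epsilon>: "0 < \<epsilon>" and \<delta>: "0 < \<delta>" "kato_modulus \<delta> \<le> ennreal \<epsilon>"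
    and far: "\<And>x'. (\<integral>\<^sup>+ y. ennreal (norm (b y)) * far_kernel (real DIM('a) - 1 + 2 * \<beta>) R (x' - y) \<partial>lborel)
      \<le> ennreal (\<epsilon> / T powr \<beta>)"
    and osc: "(\<integral>\<^sup>+ y. moll_oscillation n b y * indicator (cball 0 (X + R)) y \<partial>lborel)
      \<le> ennreal (\<epsilon> * \<delta> powr (real DIM('a) - 1))"
  shows "Hf (\<lambda>y. b y - mollify \<phi> n b y) \<beta> t x \<le> ennreal (5 * \<epsilon>)"
proof -
  let ?d = "real DIM('a)"
  let ?k = "\<lambda>z. near_kernel \<delta> z + ennreal (T powr \<beta>) * far_kernel (?d - 1 + 2 * \<beta>) R z"
  let ?m = "\<lambda>z. ennreal (\<delta> powr (1 - ?d)) * indicator (cball 0 R) z"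
  have c: "0 < T powr \<beta>" using t by simp
  have "Hf (\<lambda>y. b y - mollify \<phi> n b y) \<beta> t x
      \<le> (\<integral>\<^sup>+ y. (ennreal (norm (b y)) + abs_mollify n b y) * ?k (x - y)
            + moll_oscillation n b y * ?m (x - y) \<partial>lborel)"
    unfolding Hf_def using n t \<beta> \<delta>(1) by (intro nn_integral_mono norm_diff_mollify_Hker_le) auto
  also have "\<dots> = (\<integral>\<^sup>+ y. (ennreal (norm (b y)) + abs_mollify n b y) * ?k (x - y) \<partial>lborel)
      + ennreal (\<delta> powr (1 - ?d)) * (\<integral>\<^sup>+ y. moll_oscillation n b y * indicator (cball 0 R) (x - y) \<partial>lborel)"
    by (simp add: nn_integral_add nn_integral_cmult[symmetric] mult.left_commute)
  also have "\<dots> \<le> ennreal (4 * \<epsilon>) + ennreal (\<delta> powr (1 - ?d)) * ennreal (\<epsilon> * \<delta> powr (?d - 1))"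
  proof (rule add_mono)
    show "(\<integral>\<^sup>+ y. (ennreal (norm (b y)) + abs_mollify n b y) * ?k (x - y) \<partial>lborel) \<le> ennreal (4 * \<epsilon>)"
      by (rule nn_integral_Hker_near_far_le[OF n \<epsilon> c \<delta>(2) far])
    have "(\<integral>\<^sup>+ y. moll_oscillation n b y * indicator (cball 0 R) (x - y) \<partial>lborel)
        \<le> ennreal (\<epsilon> * \<delta> powr (?d - 1))"
      by (rule order_trans[OF nn_integral_reflect_cball_le[OF x] osc])
    then show "ennreal (\<delta> powr (1 - ?d))
        * (\<integral>\<^sup>+ y. moll_oscillation n b y * indicator (cball 0 R) (x - y) \<partial>lborel)
        \<le> ennreal (\<delta> powr (1 - ?d)) * ennreal (\<epsilon> * \<delta> powr (?d - 1))"
      by (rule mult_left_mono) simp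
  qed
  also have "ennreal (\<delta> powr (1 - ?d)) * ennreal (\<epsilon> * \<delta> powr (?d - 1)) = ennreal \<epsilon>"
  proof -
    have "\<delta> powr (1 - ?d) * (\<epsilon> * \<delta> powr (?d - 1)) = \<epsilon>"
      using \<delta>(1) by (simp add: mult.left_commute powr_add[symmetric])
    then show ?thesis using \<epsilon> by (simp add: ennreal_mult[symmetric] del: ennreal_mult ennreal_mult')
  qed
  also have "ennreal (4 * \<epsilon>) + ennreal \<epsilon> = ennreal (5 * \<epsilon>)"
    using \<epsilon> by (simp flip: ennreal_plus)
  finally show ?thesis .
qed

lemma Hf_diff_mollify_uniformly_small:
  assumes \<beta>: "1 / 2 < \<beta>" and T: "0 < T" and e: "0 < e"
  shows "\<forall>\<^sub>F n in sequentially. \<forall>t x. 0 < t \<and> t \<le> T \<and> norm x \<le> X \<longrightarrow>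
           Hf (\<lambda>y. b y - mollify \<phi> n b y) \<beta> t x \<le> ennreal e"
proof -
  define \<epsilon> where "\<epsilon> = e / 5"
  have \<epsilon>: "0 < \<epsilon>" "e = 5 * \<epsilon>" using e unfolding \<epsilon>_def by auto
  obtain \<delta> where \<delta>: "0 < \<delta>" "kato_modulus \<delta> < ennreal \<epsilon>"
    using kato_modulus_small[of "ennreal \<epsilon>"] \<epsilon> by auto
  obtain R where far: "\<And>x'. (\<integral>\<^sup>+ y. ennreal (norm (b y))
      * far_kernel (real DIM('a) - 1 + 2 * \<beta>) R (x' - y) \<partial>lborel) \<le> ennreal (\<epsilon> / T powr \<beta>)"
    using nn_integral_far_kernel_small[of "real DIM('a) - 1 + 2 * \<beta>" "\<epsilon> / T powr \<beta>"] \<beta> \<epsilon> T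
    by auto
  have "\<forall>\<^sub>F n in sequentially. (\<integral>\<^sup>+ y. moll_oscillation n b y * indicator (cball 0 (X + R)) y \<partial>lborel)
      \<le> ennreal (\<epsilon> * \<delta> powr (real DIM('a) - 1))"
    using \<epsilon> \<delta> by (intro moll_oscillation_L1_small locally_integrable) simp
  moreover have "\<forall>\<^sub>F n in sequentially. 1 \<le> n" by (rule eventually_ge_at_top)
  ultimately show ?thesis
  proof eventually_elim
    case (elim n)
    then show ?case
      using Hf_diff_mollify_le[OF elim(2) _ _ _ _ \<epsilon>(1) \<delta>(1) less_imp_le[OF \<delta>(2)] far elim(1)] \<beta>
      unfolding \<epsilon>(2) by auto
  qed
qed

end

theorem lemma4p6:
  fixes b :: "'a::euclidean_space \<Rightarrow> 'a" and \<phi> :: "'a \<Rightarrow> real" and \<alpha> :: real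
  assumes "DIM('a) \<ge> 2"
    and "0 < \<alpha>" "\<alpha> < 2"
    and "kato_d1 b"
    and "smooth_fun \<phi>" "\<forall>x. \<phi> x \<ge> 0"
    and "closure {x. \<phi> x \<noteq> 0} \<subseteq> ball 0 1"
    and "integral\<^sup>L lborel \<phi> = 1"
  shows "\<forall>K. compact K \<and> K \<subseteq> {0<..} \<times> UNIV \<longrightarrow>
    (\<lambda>n. SUP z\<in>K. Hf (\<lambda>y. b y - mollify \<phi> n b y) ((1 + min \<alpha> 1) / 2) (fst z) (snd z))
      \<longlonglongrightarrow> 0"
proof (intro allI impI)
  fix K :: "(real \<times> 'a) set"
  assume K: "compact K \<and> K \<subseteq> {0<..} \<times> UNIV"
  have "\<phi> x = 0" if "1 \<le> norm x" for x
    using that assms(7) closure_subset[of "{x. \<phi> x \<noteq> 0}"] by force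
  then interpret kato_mollification b \<phi>
    using assms by unfold_locales (auto intro: smooth_fun_continuous)
  obtain B where B: "0 < B" "\<And>z. z \<in> K \<Longrightarrow> norm z \<le> B"
    using K compact_imp_bounded bounded_pos by metis
  have K_bound: "0 < fst z \<and> fst z \<le> B \<and> norm (snd z) \<le> B" if "z \<in> K" for z
  proof -
    have "fst z \<le> norm z" using norm_fst_le[of "fst z" "snd z"] by simp
    then show ?thesis using K B(2)[OF that] norm_snd_le[of "snd z" "fst z"] that by auto
  qed
  have \<beta>: "1 / 2 < (1 + min \<alpha> 1) / 2" using assms(2) by simp
  show "(\<lambda>n. SUP z\<in>K. Hf (\<lambda>y. b y - mollify \<phi> n b y) ((1 + min \<alpha> 1) / 2) (fst z) (snd z))
      \<longlonglongrightarrow> 0"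
  proof (rule ennreal_tendsto_0I)
    fix e :: real assume "0 < e"
    from Hf_diff_mollify_uniformly_small[OF \<beta> B(1) this, of B]
    show "\<forall>\<^sub>F n in sequentially.
        (SUP z\<in>K. Hf (\<lambda>y. b y - mollify \<phi> n b y) ((1 + min \<alpha> 1) / 2) (fst z) (snd z)) \<le> ennreal e"
      by (elim eventually_mono) (simp add: K_bound SUP_least)
  qed
qed

end
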